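(* There is a constant $c>0$ such that for all $n$: if $R_1,\dots,R_\ell$ are ordered balanced set rectangles (each with respect to its own ordered balanced partition of $Z$), pairwise disjoint, with $\bigcup_{i\in[\ell]}R_i=\mathcal{L}_n$, then $\ell\ge 2^{cn}$.
   Context: $X=\{x_1,\dots,x_n\}$, $Y=\{y_1,\dots,y_n\}$, $Z=X\cup Y$, $z_i=x_i$ for $i\in[n]$, $z_i=y_{i-n}$ for $i\in[n+1,2n]$, $Z[i,j]=\{z_\ell: i\le\ell\le j\}$. $\mathcal{L}_n=\{U\subseteq Z : \exists i\in[n],\ x_i\in U \text{ and } y_i\in U\}$ (the set version of the language of words of length $2n$ over $\{a,b\}$ with two $a$'s at distance $n$). A partition $(\Pi_0,\Pi_1)$ of $Z$ is ordered (induced by $[i,j]$) if $\Pi_\ell=Z[i,j]$ for some $\ell\in\{0,1\}$; it is balanced if $2n/3\le|\Pi_0|,|\Pi_1|\le 4n/3$. A $(\Pi_0,\Pi_1)$-rectangle is a family $S\times T=\{U\cup V: U\in S,V\in T\}$ with $S\subseteq\mathcal{P}(\Pi_0)$, $T\subseteq\mathcal{P}(\Pi_1)$; it is ordered balanced if $(\Pi_0,\Pi_1)$ is ordered and balanced. *)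

theory Defs
  imports Complex_Main
begin

text \<open>Encoding: z_k is represented by the natural number k, for 1 <= k <= 2n.
  Thus x_i = i and y_i = n + i for i in [n].\<close>

definition Zset :: "nat \<Rightarrow> nat set" where
  "Zset n = {1..2*n}"

definition xe :: "nat \<Rightarrow> nat \<Rightarrow> nat" where
  "xe n i = i"

definition ye :: "nat \<Rightarrow> nat \<Rightarrow> nat" where
  "ye n i = n + i"

definition Zint :: "nat \<Rightarrow> nat \<Rightarrow> nat \<Rightarrow> nat set" where
  "Zint n i j = {l \<in> Zset n. i \<le> l \<and> l \<le> j}"

definition Lang :: "nat \<Rightarrow> nat set set" where
  "Lang n = {U. U \<subseteq> Zset n \<and> (\<exists>i\<in>{1..n}. xe n i \<in> U \<and> ye n i \<in> U)}"

definition is_partition :: "nat \<Rightarrow> nat set \<Rightarrow> nat set \<Rightarrow> bool" where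
  "is_partition n P0 P1 \<longleftrightarrow> P0 \<union> P1 = Zset n \<and> P0 \<inter> P1 = {}"

definition ordered_partition :: "nat \<Rightarrow> nat set \<Rightarrow> nat set \<Rightarrow> bool" where
  "ordered_partition n P0 P1 \<longleftrightarrow> is_partition n P0 P1 \<and>
     (\<exists>i j. P0 = Zint n i j \<or> P1 = Zint n i j)"

definition balanced_partition :: "nat \<Rightarrow> nat set \<Rightarrow> nat set \<Rightarrow> bool" where
  "balanced_partition n P0 P1 \<longleftrightarrow> is_partition n P0 P1 \<and>
     2 * real n / 3 \<le> real (card P0) \<and> real (card P0) \<le> 4 * real n / 3 \<and>
     2 * real n / 3 \<le> real (card P1) \<and> real (card P1) \<le> 4 * real n / 3"

definition rect :: "nat set set \<Rightarrow> nat set set \<Rightarrow> nat set set" where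
  "rect S T = {U \<union> V | U V. U \<in> S \<and> V \<in> T}"

definition is_rectangle :: "nat set \<Rightarrow> nat set \<Rightarrow> nat set set \<Rightarrow> bool" where
  "is_rectangle P0 P1 R \<longleftrightarrow> (\<exists>S T. S \<subseteq> Pow P0 \<and> T \<subseteq> Pow P1 \<and> R = rect S T)"

definition ordered_balanced_rectangle :: "nat \<Rightarrow> nat set set \<Rightarrow> bool" where
  "ordered_balanced_rectangle n R \<longleftrightarrow> (\<exists>P0 P1. ordered_partition n P0 P1 \<and>
     balanced_partition n P0 P1 \<and> is_rectangle P0 P1 R)"

end

(*
  Discrepancy argument. Weight U \<subseteq> Z by the product over k of w(U \<inter> {x_k, y_k}), where w is 1 on
  the empty set, 3 on singletons and -1 on the whole pair. The total weight of all sets is 6^n, that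
  of the sets containing no pair is 7^n, so L_n has weight 6^n - 7^n. In an ordered balanced partition
  the part of size at most n is an interval or the complement of one, hence contains no pair. For a
  rectangle over such a partition, Cauchy-Schwarz over the rows and the product structure of the
  weight bound its squared weight by 2^s 20^s 64^(n-s) \<le> 47^n, where s \<ge> 2n/3 is the size of that
  part: across a pair split between the two parts the weights are uncorrelated. Hence \<ell> rectangles
  carry weight at most \<ell> 47^(n/2), and \<ell> \<ge> (7^n - 6^n) / 47^(n/2) \<ge> 2^(n/60) once n \<ge> 120.
*)

theory Submission
  imports Defs "HOL-Analysis.Convex"
begin

lemma sum_Pow_singleton: "(\<Sum>Z\<in>Pow {a}. f Z) = f {} + f {a}"
  by (simp add: Pow_insert add.commute)

lemma sum_Pow_doubleton:
  "a \<noteq> b \<Longrightarrow> (\<Sum>Z\<in>Pow {a, b}. f Z) = f {} + f {a} + f {b} + f {a, b}"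
  by (simp add: Pow_insert insert_commute add_ac image_iff sum.insert sum.union_disjoint)

lemma sum_Pow_Un_disjoint:
  assumes "A \<inter> B = {}" "finite A" "finite B"
  shows "(\<Sum>X\<in>Pow (A \<union> B). f X) = (\<Sum>X\<in>Pow A. \<Sum>Y\<in>Pow B. f (X \<union> Y))"
proof -
  have "bij_betw (\<lambda>(X, Y). X \<union> Y) (Pow A \<times> Pow B) (Pow (A \<union> B))"
  proof (rule bij_betw_imageI)
    show "inj_on (\<lambda>(X, Y). X \<union> Y) (Pow A \<times> Pow B)"
      using assms(1) by (auto simp: inj_on_def) blast+
    have "X \<in> (\<lambda>(X, Y). X \<union> Y) ` (Pow A \<times> Pow B)" if "X \<subseteq> A \<union> B" for X
      using that by (intro image_eqI[of _ _ "(X \<inter> A, X \<inter> B)"]) auto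
    then show "(\<lambda>(X, Y). X \<union> Y) ` (Pow A \<times> Pow B) = Pow (A \<union> B)"
      by auto
  qed
  then show ?thesis
    by (simp add: sum.reindex_bij_betw[symmetric] sum.cartesian_product case_prod_beta)
qed

lemma sum_Pow_prod_Int:
  fixes g :: "'i \<Rightarrow> 'a set \<Rightarrow> 'b::comm_semiring_1"
  assumes "finite K" "finite D" "D \<subseteq> (\<Union>k\<in>K. B k)"
    and "\<forall>i\<in>K. \<forall>j\<in>K. i \<noteq> j \<longrightarrow> B i \<inter> B j = {}"
  shows "(\<Sum>X\<in>Pow D. \<Prod>k\<in>K. g k (X \<inter> B k)) = (\<Prod>k\<in>K. \<Sum>Z\<in>Pow (D \<inter> B k). g k Z)"
  using assms
proof (induction K arbitrary: D rule: finite_induct)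
  case empty
  then show ?case by simp
next
  case (insert k K)
  have disj: "B j \<inter> B k = {}" if "j \<in> K" for j
    using insert.hyps(2) insert.prems(3) that by auto
  define D' where "D' = D - B k"
  have split: "D = D' \<union> (D \<inter> B k)" "D' \<inter> (D \<inter> B k) = {}"
    by (auto simp: D'_def)
  have IH: "(\<Sum>X\<in>Pow D'. \<Prod>j\<in>K. g j (X \<inter> B j)) = (\<Prod>j\<in>K. \<Sum>Z\<in>Pow (D \<inter> B j). g j Z)"
  proof -
    have "D' \<inter> B j = D \<inter> B j" if "j \<in> K" for j
      using disj[OF that] by (auto simp: D'_def)
    then show ?thesis
      using insert.IH[of D'] insert.prems by (auto simp: D'_def)
  qed
  have "(\<Sum>X\<in>Pow D. \<Prod>j\<in>insert k K. g j (X \<inter> B j))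
      = (\<Sum>X\<in>Pow D'. \<Sum>Y\<in>Pow (D \<inter> B k). \<Prod>j\<in>insert k K. g j ((X \<union> Y) \<inter> B j))"
    using sum_Pow_Un_disjoint[OF split(2)] split(1) insert.prems(1) by (simp add: D'_def)
  also have "\<dots> = (\<Sum>X\<in>Pow D'. \<Sum>Y\<in>Pow (D \<inter> B k). (\<Prod>j\<in>K. g j (X \<inter> B j)) * g k Y)"
  proof (intro sum.cong refl)
    fix X Y assume "X \<in> Pow D'" "Y \<in> Pow (D \<inter> B k)"
    then have "(X \<union> Y) \<inter> B k = Y" "\<forall>j\<in>K. (X \<union> Y) \<inter> B j = X \<inter> B j"
      using disj by (auto simp: D'_def) blast
    then show "(\<Prod>j\<in>insert k K. g j ((X \<union> Y) \<inter> B j)) = (\<Prod>j\<in>K. g j (X \<inter> B j)) * g k Y"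
      using insert.hyps by (simp add: mult.commute)
  qed
  also have "\<dots> = (\<Prod>j\<in>insert k K. \<Sum>Z\<in>Pow (D \<inter> B j). g j Z)"
    unfolding sum_product[symmetric] IH using insert.hyps by (simp add: mult.commute)
  finally show ?case .
qed

lemma sum_Pow_prod_Int_filter:
  fixes g :: "'i \<Rightarrow> 'a set \<Rightarrow> 'b::comm_semiring_1"
  assumes "finite K" "finite D" "D \<subseteq> (\<Union>k\<in>K. B k)"
    and "\<forall>i\<in>K. \<forall>j\<in>K. i \<noteq> j \<longrightarrow> B i \<inter> B j = {}"
  shows "(\<Sum>X | X \<subseteq> D \<and> (\<forall>k\<in>K. P k (X \<inter> B k)). \<Prod>k\<in>K. g k (X \<inter> B k))
       = (\<Prod>k\<in>K. \<Sum>Z\<in>Pow (D \<inter> B k). if P k Z then g k Z else 0)"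
proof -
  have "(\<Sum>X | X \<subseteq> D \<and> (\<forall>k\<in>K. P k (X \<inter> B k)). \<Prod>k\<in>K. g k (X \<inter> B k))
      = (\<Sum>X\<in>Pow D. if \<forall>k\<in>K. P k (X \<inter> B k) then \<Prod>k\<in>K. g k (X \<inter> B k) else 0)"
    using assms(2) by (simp add: sum.inter_filter[symmetric] Pow_def conj_commute)
  also have "\<dots> = (\<Sum>X\<in>Pow D. \<Prod>k\<in>K. if P k (X \<inter> B k) then g k (X \<inter> B k) else 0)"
    using assms(1) by (intro sum.cong refl) (fastforce intro: prod_zero)
  finally show ?thesis
    using sum_Pow_prod_Int[OF assms] by simp
qed

lemma sum_rect:
  assumes "PA \<inter> PB = {}" "SA \<subseteq> Pow PA" "SB \<subseteq> Pow PB"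
  shows "(\<Sum>U\<in>rect SA SB. f U) = (\<Sum>X\<in>SA. \<Sum>Y\<in>SB. f (X \<union> Y))"
proof -
  have img: "rect SA SB = (\<lambda>(X, Y). X \<union> Y) ` (SA \<times> SB)"
    by (auto simp: rect_def)
  have inj: "inj_on (\<lambda>(X, Y). X \<union> Y) (SA \<times> SB)"
  proof (rule inj_onI, clarify)
    fix X Y X' Y' assume "X \<in> SA" "Y \<in> SB" "X' \<in> SA" "Y' \<in> SB" "X \<union> Y = X' \<union> Y'"
    moreover have "X = (X \<union> Y) \<inter> PA \<and> Y = (X \<union> Y) \<inter> PB" if "X \<in> SA" "Y \<in> SB" for X Y
      using that assms by blast
    ultimately show "X = X' \<and> Y = Y'"
      by metis
  qed
  show ?thesis
    unfolding img sum.reindex[OF inj] by (simp add: sum.cartesian_product case_prod_beta comp_def)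
qed

lemma sum_rect_squared_le:
  fixes f :: "nat set \<Rightarrow> real"
  assumes "PA \<inter> PB = {}" "finite PA" "finite PB" "SA \<subseteq> Pow PA" "SB \<subseteq> Pow PB"
  shows "(\<Sum>U\<in>rect SA SB. f U)\<^sup>2
    \<le> 2 ^ card PA * (\<Sum>Y\<in>Pow PB. \<Sum>Y'\<in>Pow PB. \<bar>\<Sum>X\<in>Pow PA. f (X \<union> Y) * f (X \<union> Y')\<bar>)"
proof -
  define c where "c X = (\<Sum>Y\<in>SB. f (X \<union> Y))" for X
  have finSB: "finite SB"
    using assms(3,5) by (meson finite_Pow_iff finite_subset)
  have "card SA \<le> card (Pow PA)"
    using assms(2,4) by (intro card_mono) auto
  then have card_SA: "real (card SA) \<le> 2 ^ card PA"
    using assms(2) by (simp add: card_Pow flip: of_nat_le_iff)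
  have "(\<Sum>U\<in>rect SA SB. f U)\<^sup>2 = (\<Sum>X\<in>SA. c X)\<^sup>2"
    unfolding c_def by (simp only: sum_rect[OF assms(1,4,5)])
  also have "\<dots> \<le> (\<Sum>X\<in>SA. (c X)\<^sup>2) * card SA"
    by (rule sum_squared_le_sum_of_squares)
  also have "\<dots> \<le> (\<Sum>X\<in>Pow PA. (c X)\<^sup>2) * 2 ^ card PA"
    using assms(2,4) card_SA by (intro mult_mono sum_mono2 sum_nonneg) auto
  also have "(\<Sum>X\<in>Pow PA. (c X)\<^sup>2) = (\<Sum>Y\<in>SB. \<Sum>Y'\<in>SB. \<Sum>X\<in>Pow PA. f (X \<union> Y) * f (X \<union> Y'))"
    unfolding c_def power2_eq_square sum_product
    by (subst sum.swap) (simp add: sum.swap[of _ "Pow PA"])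
  also have "\<dots> \<le> (\<Sum>Y\<in>SB. \<Sum>Y'\<in>SB. \<bar>\<Sum>X\<in>Pow PA. f (X \<union> Y) * f (X \<union> Y')\<bar>)"
    by (intro sum_mono) simp
  also have "\<dots> \<le> (\<Sum>Y\<in>Pow PB. \<Sum>Y'\<in>Pow PB. \<bar>\<Sum>X\<in>Pow PA. f (X \<union> Y) * f (X \<union> Y')\<bar>)"
    using assms(3,5) finSB by (intro order_trans[OF sum_mono sum_mono2] sum_mono2 sum_nonneg) auto
  finally show ?thesis
    by (simp add: mult.commute)
qed

definition pair :: "nat \<Rightarrow> nat \<Rightarrow> nat set" where
  "pair n k = {xe n k, ye n k}"

definition pair_free :: "nat \<Rightarrow> nat set \<Rightarrow> bool" where
  "pair_free n P \<longleftrightarrow> (\<forall>k\<in>{1..n}. \<not> pair n k \<subseteq> P)"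

definition pair_weight :: "nat \<Rightarrow> nat \<Rightarrow> nat set \<Rightarrow> real" where
  "pair_weight n k V = (if pair n k \<subseteq> V then -1 else if pair n k \<inter> V = {} then 1 else 3)"

definition weight :: "nat \<Rightarrow> nat set \<Rightarrow> real" where
  "weight n U = (\<Prod>k\<in>{1..n}. pair_weight n k (U \<inter> pair n k))"

lemma finite_pair [simp]: "finite (pair n k)"
  by (simp add: pair_def)

lemma pair_disjoint: "\<forall>i\<in>{1..n}. \<forall>j\<in>{1..n}. i \<noteq> j \<longrightarrow> pair n i \<inter> pair n j = {}"
  by (auto simp: pair_def xe_def ye_def)

lemma Zset_eq_UN_pair: "Zset n = (\<Union>k\<in>{1..n}. pair n k)"
proof (intro equalityI subsetI)
  fix z assume "z \<in> Zset n"
  then have "z \<in> pair n z \<and> z \<in> {1..n} \<or> z \<in> pair n (z - n) \<and> z - n \<in> {1..n}"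
    by (auto simp: Zset_def pair_def xe_def ye_def)
  then show "z \<in> (\<Union>k\<in>{1..n}. pair n k)"
    by blast
qed (auto simp: Zset_def pair_def xe_def ye_def)

lemma finite_Zset [simp]: "finite (Zset n)"
  by (simp add: Zset_def)

lemma card_Zset: "card (Zset n) = 2 * n"
  by (simp add: Zset_def)

lemma sum_Pow_pair:
  assumes "k \<in> {1..n}"
  shows "(\<Sum>Z\<in>Pow (pair n k). f Z) = f {} + f {k} + f {n + k} + f {k, n + k}"
  using assms by (simp add: pair_def xe_def ye_def sum_Pow_doubleton)

lemma Zset_Int_pair: "k \<in> {1..n} \<Longrightarrow> Zset n \<inter> pair n k = pair n k"
  using Zset_eq_UN_pair by blast

lemma sum_pair_weight:
  assumes "k \<in> {1..n}"
  shows "(\<Sum>Z\<in>Pow (pair n k). pair_weight n k Z) = 6"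
  using assms unfolding sum_Pow_pair[OF assms] by (simp add: pair_weight_def pair_def xe_def ye_def)

lemma sum_weight_Pow_Zset: "(\<Sum>U\<in>Pow (Zset n). weight n U) = 6 ^ n"
proof -
  have "(\<Sum>U\<in>Pow (Zset n). weight n U) = (\<Prod>k\<in>{1..n}. \<Sum>Z\<in>Pow (Zset n \<inter> pair n k). pair_weight n k Z)"
    unfolding weight_def using Zset_eq_UN_pair pair_disjoint by (intro sum_Pow_prod_Int) auto
  also have "\<dots> = (\<Prod>k\<in>{1..n}. 6)"
    by (intro prod.cong refl) (simp add: Zset_Int_pair sum_pair_weight)
  finally show ?thesis
    by simp
qed

lemma sum_pair_weight_proper:
  assumes "k \<in> {1..n}"
  shows "(\<Sum>Z\<in>Pow (pair n k). if \<not> pair n k \<subseteq> Z then pair_weight n k Z else 0) = 7"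
  using assms unfolding sum_Pow_pair[OF assms] by (simp add: pair_weight_def pair_def xe_def ye_def)

lemma sum_weight_pair_free: "(\<Sum>U | U \<subseteq> Zset n \<and> pair_free n U. weight n U) = 7 ^ n"
proof -
  have "{U. U \<subseteq> Zset n \<and> pair_free n U}
      = {U. U \<subseteq> Zset n \<and> (\<forall>k\<in>{1..n}. \<not> pair n k \<subseteq> U \<inter> pair n k)}"
    by (auto simp: pair_free_def)
  then have "(\<Sum>U | U \<subseteq> Zset n \<and> pair_free n U. weight n U)
      = (\<Prod>k\<in>{1..n}. \<Sum>Z\<in>Pow (Zset n \<inter> pair n k). if \<not> pair n k \<subseteq> Z then pair_weight n k Z else 0)"
    unfolding weight_def using Zset_eq_UN_pair pair_disjoint
    by (simp only:) (intro sum_Pow_prod_Int_filter, auto)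
  also have "\<dots> = (\<Prod>k\<in>{1..n}. 7)"
    by (intro prod.cong refl) (simp only: Zset_Int_pair sum_pair_weight_proper)
  finally show ?thesis
    by simp
qed

lemma Lang_eq: "Lang n = Pow (Zset n) - {U. U \<subseteq> Zset n \<and> pair_free n U}"
  by (auto simp: Lang_def pair_free_def pair_def)

lemma finite_Lang: "finite (Lang n)"
  unfolding Lang_eq by simp

lemma sum_weight_Lang: "(\<Sum>U\<in>Lang n. weight n U) = 6 ^ n - 7 ^ n"
  unfolding Lang_eq
  by (subst sum_diff) (auto simp: sum_weight_Pow_Zset sum_weight_pair_free)

definition pair_correlation :: "nat \<Rightarrow> nat set \<Rightarrow> nat \<Rightarrow> nat set \<Rightarrow> nat set \<Rightarrow> real" where
  "pair_correlation n P k Z Z' =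
     (\<Sum>V\<in>Pow (P \<inter> pair n k). pair_weight n k (V \<union> Z) * pair_weight n k (V \<union> Z'))"

(* For a pair split between PA and PB the mixed correlation 1 * 3 + 3 * (-1) vanishes. *)
lemma sum_abs_pair_correlation:
  assumes "PA \<union> PB = Zset n" "PA \<inter> PB = {}" "k \<in> {1..n}" "\<not> pair n k \<subseteq> PA"
  shows "(\<Sum>Z\<in>Pow (PB \<inter> pair n k). \<Sum>Z'\<in>Pow (PB \<inter> pair n k). \<bar>pair_correlation n PA k Z Z'\<bar>)
       = (if PA \<inter> pair n k \<noteq> {} then 20 else 64)"
proof -
  have ne: "k \<noteq> n + k" and inZ: "k \<in> Zset n" "n + k \<in> Zset n"
    using assms(3) by (auto simp: Zset_def)
  consider "PA \<inter> pair n k = {k}" "PB \<inter> pair n k = {n + k}"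
    | "PA \<inter> pair n k = {n + k}" "PB \<inter> pair n k = {k}"
    | "PA \<inter> pair n k = {}" "PB \<inter> pair n k = {k, n + k}"
    using assms(1,2,4) inZ by (auto simp: pair_def xe_def ye_def)
  then show ?thesis
    by cases (use ne in \<open>simp_all add: pair_correlation_def sum_Pow_singleton sum_Pow_doubleton
        pair_weight_def pair_def xe_def ye_def insert_commute\<close>)
qed

lemma sum_Pow_weight_mult:
  assumes "PA \<subseteq> Zset n"
  shows "(\<Sum>X\<in>Pow PA. weight n (X \<union> Y) * weight n (X \<union> Y'))
       = (\<Prod>k\<in>{1..n}. pair_correlation n PA k (Y \<inter> pair n k) (Y' \<inter> pair n k))"
proof -
  have "(\<Sum>X\<in>Pow PA. weight n (X \<union> Y) * weight n (X \<union> Y'))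
      = (\<Sum>X\<in>Pow PA. \<Prod>k\<in>{1..n}. pair_weight n k (X \<inter> pair n k \<union> Y \<inter> pair n k)
                                   * pair_weight n k (X \<inter> pair n k \<union> Y' \<inter> pair n k))"
    by (simp add: weight_def prod.distrib Int_Un_distrib2)
  also have "\<dots> = (\<Prod>k\<in>{1..n}. pair_correlation n PA k (Y \<inter> pair n k) (Y' \<inter> pair n k))"
    unfolding pair_correlation_def
    using assms finite_subset[OF assms] Zset_eq_UN_pair pair_disjoint by (intro sum_Pow_prod_Int) auto
  finally show ?thesis .
qed

lemma sum_abs_weight_correlation:
  assumes "PA \<union> PB = Zset n" "PA \<inter> PB = {}"
  shows "(\<Sum>Y\<in>Pow PB. \<Sum>Y'\<in>Pow PB. \<bar>\<Sum>X\<in>Pow PA. weight n (X \<union> Y) * weight n (X \<union> Y')\<bar>)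
       = (\<Prod>k\<in>{1..n}. \<Sum>Z\<in>Pow (PB \<inter> pair n k). \<Sum>Z'\<in>Pow (PB \<inter> pair n k).
            \<bar>pair_correlation n PA k Z Z'\<bar>)"
proof -
  have PA: "PA \<subseteq> Zset n"
    using assms(1) by blast
  have PB: "finite PB" "PB \<subseteq> (\<Union>k\<in>{1..n}. pair n k)"
    using assms(1) finite_Zset[of n] unfolding Zset_eq_UN_pair by (metis finite_Un, blast)
  have "(\<Sum>Y\<in>Pow PB. \<Sum>Y'\<in>Pow PB. \<bar>\<Sum>X\<in>Pow PA. weight n (X \<union> Y) * weight n (X \<union> Y')\<bar>)
      = (\<Sum>Y\<in>Pow PB. \<Sum>Y'\<in>Pow PB. \<Prod>k\<in>{1..n}. \<bar>pair_correlation n PA k (Y \<inter> pair n k) (Y' \<inter> pair n k)\<bar>)"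
    by (simp only: sum_Pow_weight_mult[OF PA] abs_prod)
  also have "\<dots> = (\<Sum>Y\<in>Pow PB. \<Prod>k\<in>{1..n}. \<Sum>Z'\<in>Pow (PB \<inter> pair n k).
                      \<bar>pair_correlation n PA k (Y \<inter> pair n k) Z'\<bar>)"
    using PB pair_disjoint by (intro sum.cong[OF refl] sum_Pow_prod_Int) auto
  also have "\<dots> = (\<Prod>k\<in>{1..n}. \<Sum>Z\<in>Pow (PB \<inter> pair n k). \<Sum>Z'\<in>Pow (PB \<inter> pair n k).
                      \<bar>pair_correlation n PA k Z Z'\<bar>)"
    using PB pair_disjoint by (intro sum_Pow_prod_Int) auto
  finally show ?thesis .
qed

lemma card_pair_free:
  assumes "P \<subseteq> Zset n" "pair_free n P"
  shows "card {k\<in>{1..n}. P \<inter> pair n k \<noteq> {}} = card P"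
proof -
  let ?K = "{k\<in>{1..n}. P \<inter> pair n k \<noteq> {}}"
  have P: "P = (\<Union>k\<in>?K. P \<inter> pair n k)"
    using assms(1) unfolding Zset_eq_UN_pair by force
  have "card (P \<inter> pair n k) = 1" if "k \<in> ?K" for k
  proof -
    have "P \<inter> pair n k = {k} \<or> P \<inter> pair n k = {n + k}"
      using that assms(2) by (auto simp: pair_free_def pair_def xe_def ye_def)
    then show ?thesis
      by auto
  qed
  then have "card P = (\<Sum>k\<in>?K. 1)"
    using pair_disjoint[of n] by (subst P, subst card_UN_disjoint) (auto simp: disjoint_iff)
  then show ?thesis
    by simp
qed

lemma sum_abs_weight_correlation_pair_free:
  assumes "PA \<union> PB = Zset n" "PA \<inter> PB = {}" "pair_free n PA"
  shows "(\<Sum>Y\<in>Pow PB. \<Sum>Y'\<in>Pow PB. \<bar>\<Sum>X\<in>Pow PA. weight n (X \<union> Y) * weight n (X \<union> Y')\<bar>)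
       = 20 ^ card PA * 64 ^ (n - card PA)"
proof -
  let ?K = "{k\<in>{1..n}. PA \<inter> pair n k \<noteq> {}}"
  have "(\<Sum>Y\<in>Pow PB. \<Sum>Y'\<in>Pow PB. \<bar>\<Sum>X\<in>Pow PA. weight n (X \<union> Y) * weight n (X \<union> Y')\<bar>)
      = (\<Prod>k\<in>{1..n}. if PA \<inter> pair n k \<noteq> {} then 20 else 64)"
    unfolding sum_abs_weight_correlation[OF assms(1,2)]
    using assms by (intro prod.cong refl sum_abs_pair_correlation) (auto simp: pair_free_def)
  also have "\<dots> = (\<Prod>k\<in>?K. 20) * (\<Prod>k\<in>{1..n} - ?K. 64)"
  proof -
    have "{1..n} \<inter> {k. PA \<inter> pair n k \<noteq> {}} = ?K" "{1..n} \<inter> - {k. PA \<inter> pair n k \<noteq> {}} = {1..n} - ?K"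
      by auto
    then show ?thesis
      by (simp only: prod.If_cases[OF finite_atLeastAtMost])
  qed
  also have "\<dots> = 20 ^ card ?K * 64 ^ (n - card ?K)"
  proof -
    have "card ({1..n} - ?K) = n - card ?K"
      by (subst card_Diff_subset) auto
    then show ?thesis
      by (simp only: prod_constant)
  qed
  also have "card ?K = card PA"
    using assms by (intro card_pair_free) auto
  finally show ?thesis .
qed

lemma sum_weight_rect_squared_le:
  assumes "PA \<union> PB = Zset n" "PA \<inter> PB = {}" "pair_free n PA" "SA \<subseteq> Pow PA" "SB \<subseteq> Pow PB"
  shows "(\<Sum>U\<in>rect SA SB. weight n U)\<^sup>2 \<le> 40 ^ card PA * 64 ^ (n - card PA)"
proof -
  have "finite PA" "finite PB"
    using assms(1) finite_Zset[of n] by (metis finite_Un)+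
  then have "(\<Sum>U\<in>rect SA SB. weight n U)\<^sup>2 \<le> 2 ^ card PA * (20 ^ card PA * 64 ^ (n - card PA))"
    using sum_rect_squared_le[OF assms(2) _ _ assms(4,5), where f = "weight n"]
      sum_abs_weight_correlation_pair_free[OF assms(1-3)]
    by simp
  then show ?thesis
    by (simp add: mult.assoc[symmetric] flip: power_mult_distrib)
qed

lemma pair_free_Zint:
  assumes "card (Zint n i j) \<le> n"
  shows "pair_free n (Zint n i j)"
  unfolding pair_free_def
proof (intro ballI notI)
  fix k assume k: "k \<in> {1..n}" and "pair n k \<subseteq> Zint n i j"
  then have "{k..n + k} \<subseteq> Zint n i j"
    by (auto simp: pair_def xe_def ye_def Zint_def Zset_def)
  then have "card {k..n + k} \<le> card (Zint n i j)"
    by (intro card_mono) (auto simp: Zint_def)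
  with assms show False
    by simp
qed

lemma pair_free_Zset_Diff_Zint:
  assumes "card (Zset n - Zint n i j) \<le> n"
  shows "pair_free n (Zset n - Zint n i j)"
  unfolding pair_free_def
proof (intro ballI notI)
  fix k assume k: "k \<in> {1..n}" and "pair n k \<subseteq> Zset n - Zint n i j"
  then have out: "k < i \<or> j < k" "n + k < i \<or> j < n + k"
    by (auto simp: pair_def xe_def ye_def Zint_def Zset_def)
  have "n + 1 \<le> card (Zset n - Zint n i j)"
  proof (cases "n + k < i \<or> j < k")
    case True
    then have "{k..n + k} \<subseteq> Zset n - Zint n i j"
      using k by (auto simp: Zint_def Zset_def)
    then have "card {k..n + k} \<le> card (Zset n - Zint n i j)"
      by (intro card_mono) auto
    then show ?thesis
      by simp
  next
    case False
    then have "{1..k} \<union> {n + k..2 * n} \<subseteq> Zset n - Zint n i j"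
      using k out by (auto simp: Zint_def Zset_def)
    moreover have "card ({1..k} \<union> {n + k..2 * n}) = n + 1"
      using k by (subst card_Un_disjoint) auto
    ultimately show ?thesis
      by (metis card_mono finite_Diff finite_Zset)
  qed
  with assms show False
    by simp
qed

lemma ordered_partition_pair_free:
  assumes "ordered_partition n P0 P1" "card P0 \<le> n"
  shows "pair_free n P0"
proof -
  obtain i j where "P0 = Zint n i j \<or> P1 = Zint n i j"
    using assms(1) by (auto simp: ordered_partition_def)
  moreover have "P0 = Zset n - P1"
    using assms(1) by (auto simp: ordered_partition_def is_partition_def)
  ultimately show ?thesis
    using assms(2) pair_free_Zint pair_free_Zset_Diff_Zint by auto
qed

lemma rect_commute: "rect S T = rect T S"
  by (auto simp: rect_def Un_commute)

lemma ordered_partition_commute: "ordered_partition n P0 P1 \<longleftrightarrow> ordered_partition n P1 P0"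
  unfolding ordered_partition_def is_partition_def by (metis Un_commute Int_commute)

lemma ordered_balanced_rectangle_split:
  assumes "ordered_balanced_rectangle n R"
  obtains PA PB SA SB where "PA \<union> PB = Zset n" "PA \<inter> PB = {}" "pair_free n PA"
    "2 * n \<le> 3 * card PA" "card PA \<le> n" "SA \<subseteq> Pow PA" "SB \<subseteq> Pow PB" "R = rect SA SB"
proof -
  obtain P0 P1 S T where op: "ordered_partition n P0 P1" and bp: "balanced_partition n P0 P1"
    and ST: "S \<subseteq> Pow P0" "T \<subseteq> Pow P1" "R = rect S T"
    using assms unfolding ordered_balanced_rectangle_def is_rectangle_def by blast
  have part: "P0 \<union> P1 = Zset n" "P0 \<inter> P1 = {}"
    using op by (auto simp: ordered_partition_def is_partition_def)
  then have card: "card P0 + card P1 = 2 * n"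
    by (metis card_Un_disjoint finite_Un finite_Zset card_Zset)
  have bal: "2 * n \<le> 3 * card P0" "2 * n \<le> 3 * card P1"
    using bp unfolding balanced_partition_def by linarith+
  show ?thesis
  proof (cases "card P0 \<le> n")
    case True
    show ?thesis
      by (rule that[of P0 P1 S T]) (use part bal ST True ordered_partition_pair_free[OF op] in auto)
  next
    case False
    then have "card P1 \<le> n"
      using card by linarith
    moreover from this have "pair_free n P1"
      using op by (intro ordered_partition_pair_free[of n P1 P0]) (simp_all add: ordered_partition_commute)
    ultimately show ?thesis
      by (intro that[of P1 P0 T S]) (use part bal ST rect_commute in auto)
  qed
qed

lemma mult_power_le_power_from:
  fixes a b c :: real
  assumes "0 \<le> a" "a \<le> b" "0 \<le> c" "c * a ^ m \<le> b ^ m" "m \<le> n"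
  shows "c * a ^ n \<le> b ^ n"
proof -
  have "c * a ^ n = (c * a ^ m) * a ^ (n - m)"
    using assms(5) by (simp add: power_add[symmetric])
  also have "\<dots> \<le> b ^ m * b ^ (n - m)"
    using assms by (intro mult_mono power_mono) auto
  also have "\<dots> = b ^ n"
    using assms(5) by (simp add: power_add[symmetric])
  finally show ?thesis .
qed

lemma forty_sixty_four_le:
  assumes "2 * n \<le> 3 * s" "s \<le> n"
  shows "(40::real) ^ s * 64 ^ (n - s) \<le> 47 ^ n"
proof -
  obtain d where d: "3 * s = 2 * n + d"
    using assms(1) le_Suc_ex by blast
  then have d_le: "d \<le> n" and d': "3 * (n - s) = n - d"
    using assms(2) by linarith+
  have "((40::real) ^ s * 64 ^ (n - s)) ^ 3 = 40 ^ (3 * s) * 64 ^ (3 * (n - s))"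
    by (simp add: power_mult_distrib mult.commute[of 3] flip: power_mult)
  also have "\<dots> = 40 ^ (2 * n) * (40 ^ d * 64 ^ (n - d))"
    unfolding d d' by (simp add: power_add)
  also have "\<dots> \<le> 40 ^ (2 * n) * (64 ^ d * 64 ^ (n - d))"
    by (intro mult_left_mono mult_right_mono power_mono) auto
  also have "\<dots> = (40 ^ 2 * 64) ^ n"
    using d_le by (simp add: power_mult flip: power_add power_mult_distrib)
  also have "\<dots> \<le> (47 ^ 3) ^ n"
    by (intro power_mono) auto
  also have "\<dots> = (47 ^ n) ^ 3"
    by (simp only: power_mult[symmetric] mult.commute)
  finally have "((40::real) ^ s * 64 ^ (n - s)) ^ 3 \<le> (47 ^ n) ^ 3" .
  then show ?thesis
    by (simp add: power_mono_iff)
qed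

lemma abs_sum_weight_ordered_balanced_rectangle:
  assumes "ordered_balanced_rectangle n R"
  shows "\<bar>\<Sum>U\<in>R. weight n U\<bar> \<le> sqrt (47 ^ n)"
proof -
  obtain PA PB SA SB where PA: "PA \<union> PB = Zset n" "PA \<inter> PB = {}" "pair_free n PA"
    and card: "2 * n \<le> 3 * card PA" "card PA \<le> n"
    and R: "SA \<subseteq> Pow PA" "SB \<subseteq> Pow PB" "R = rect SA SB"
    using ordered_balanced_rectangle_split[OF assms] .
  have "(\<Sum>U\<in>R. weight n U)\<^sup>2 \<le> 40 ^ card PA * 64 ^ (n - card PA)"
    unfolding R(3) by (rule sum_weight_rect_squared_le[OF PA R(1,2)])
  also have "\<dots> \<le> 47 ^ n"
    using forty_sixty_four_le[OF card] .
  finally show ?thesis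
    by (simp add: real_le_rsqrt flip: real_sqrt_abs)
qed

lemma sum_weight_disjoint_cover_Lang:
  assumes "\<forall>i\<in>{1..l}. ordered_balanced_rectangle n (R i)"
    and "\<forall>i\<in>{1..l}. \<forall>j\<in>{1..l}. i \<noteq> j \<longrightarrow> R i \<inter> R j = {}"
    and "(\<Union>i\<in>{1..l}. R i) = Lang n"
  shows "7 ^ n - 6 ^ n \<le> real l * sqrt (47 ^ n)"
proof -
  have "finite (R i)" if "i \<in> {1..l}" for i
  proof -
    have "R i \<subseteq> Lang n"
      using that assms(3) by blast
    then show ?thesis
      using finite_Lang by (rule finite_subset)
  qed
  then have "(\<Sum>U\<in>Lang n. weight n U) = (\<Sum>i\<in>{1..l}. \<Sum>U\<in>R i. weight n U)"
    unfolding assms(3)[symmetric] using assms(2) by (intro sum.UNION_disjoint) auto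
  then have "7 ^ n - 6 ^ n = \<bar>\<Sum>i\<in>{1..l}. \<Sum>U\<in>R i. weight n U\<bar>"
    using sum_weight_Lang[of n] power_mono[of "6::real" 7 n] by simp
  also have "\<dots> \<le> (\<Sum>i\<in>{1..l}. \<bar>\<Sum>U\<in>R i. weight n U\<bar>)"
    by (rule sum_abs)
  also have "\<dots> \<le> (\<Sum>i\<in>{1..l}. sqrt (47 ^ n))"
    using assms(1) abs_sum_weight_ordered_balanced_rectangle by (intro sum_mono) auto
  finally show ?thesis
    by simp
qed

lemma two_powr_le_of_seven_power_le:
  fixes x :: real
  assumes "120 \<le> n" "0 \<le> x" "7 ^ n \<le> 2 * x * sqrt (47 ^ n)"
  shows "2 powr (n / 60) \<le> x"
proof -
  have "(7 ^ n) ^ 2 \<le> (2 * x * sqrt (47 ^ n)) ^ 2"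
    using assms(3) by (intro power_mono) auto
  moreover have "(7 ^ n) ^ 2 = (49::real) ^ n"
    by (simp add: power2_eq_square flip: power_mult_distrib)
  ultimately have "(49::real) ^ n \<le> 4 * x ^ 2 * 47 ^ n"
    by (simp add: power_mult_distrib)
  then have "((49::real) ^ n) ^ 30 \<le> (2 ^ 2 * x ^ 2 * 47 ^ n) ^ 30"
    by (intro power_mono) auto
  then have upper: "((49::real) ^ 30) ^ n \<le> 2 ^ 60 * x ^ 60 * (47 ^ 30) ^ n"
    by (simp only: power_mult_distrib power_mult[symmetric] mult.commute[of n] mult.commute[of 2])
      (simp only: numeral_times_numeral semiring_norm)
  have "(3 * 47 ^ 30) ^ n \<le> ((49::real) ^ 30) ^ n"
    by (intro power_mono) auto
  with upper have "3 ^ n * (47 ^ 30) ^ n \<le> 2 ^ 60 * x ^ 60 * ((47::real) ^ 30) ^ n"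
    unfolding power_mult_distrib[symmetric] by (rule order_trans[rotated])
  then have "3 ^ n \<le> 2 ^ 60 * x ^ 60"
    by (rule mult_right_le_imp_le) simp
  moreover have "2 ^ 60 * 2 ^ n \<le> (3::real) ^ n"
    using assms(1) by (rule mult_power_le_power_from[where m = 120, rotated 4]) simp_all
  ultimately have "(2::real) ^ 60 * 2 ^ n \<le> 2 ^ 60 * x ^ 60"
    by linarith
  moreover have "(2 powr (n / 60)) ^ 60 = (2::real) ^ n"
    by (simp add: powr_power powr_realpow)
  ultimately have "(2 powr (n / 60)) ^ 60 \<le> x ^ 60"
    by simp
  then show ?thesis
    using assms(2) by (simp add: power_mono_iff)
qed

theorem mainTheorem9:
  shows "\<exists>c::real. c > 0 \<and> (\<exists>N::nat. \<forall>n \<ge> N. \<forall>(l::nat) (R :: nat \<Rightarrow> nat set set).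
     (\<forall>i\<in>{1..l}. ordered_balanced_rectangle n (R i)) \<longrightarrow>
     (\<forall>i\<in>{1..l}. \<forall>j\<in>{1..l}. i \<noteq> j \<longrightarrow> R i \<inter> R j = {}) \<longrightarrow>
     (\<Union>i\<in>{1..l}. R i) = Lang n \<longrightarrow>
     real l \<ge> 2 powr (c * real n))"
proof (intro exI[of _ "1 / 60"] conjI exI[of _ "120 :: nat"] allI impI)
  fix n l :: nat and R :: "nat \<Rightarrow> nat set set"
  assume n: "120 \<le> n"
    and "\<forall>i\<in>{1..l}. ordered_balanced_rectangle n (R i)"
    and "\<forall>i\<in>{1..l}. \<forall>j\<in>{1..l}. i \<noteq> j \<longrightarrow> R i \<inter> R j = {}"
    and "(\<Union>i\<in>{1..l}. R i) = Lang n"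
  then have "7 ^ n - 6 ^ n \<le> real l * sqrt (47 ^ n)"
    by (intro sum_weight_disjoint_cover_Lang)
  moreover have "2 * 6 ^ n \<le> (7::real) ^ n"
    by (rule mult_power_le_power_from[where m = 5]) (use n in simp_all)
  ultimately have "7 ^ n \<le> 2 * real l * sqrt (47 ^ n)"
    by linarith
  then show "2 powr (1 / 60 * real n) \<le> real l"
    using two_powr_le_of_seven_power_le[OF n] by simp
qed simp

end
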